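(* Let $G$ be a connected graph of order $n\geq 2$ and let $g:V(G_1)\to V(G_2)$ be any function, where $G_1,G_2$ are disjoint copies of $G$. Then $$1\leq Dist(F_{G})\leq Dist(G)+1.$$ Moreover, both bounds are sharp: there exist a connected graph $G$ of order at least $2$ and a function $g$ with $Dist(F_G)=1$, and there exist a connected graph $G$ of order at least $2$ and a function $g$ with $Dist(F_G)=Dist(G)+1$.
   Context: All graphs are finite, simple and undirected. A labeling $f:V(H)\to\{1,\dots,t\}$ of a graph $H$ is $t$-distinguishing if the only automorphism of $H$ preserving all vertex labels is the identity. The distinguishing number $Dist(H)$ is the least $t$ such that $H$ has a $t$-distinguishing labeling. Functigraph: let $G_1,G_2$ be disjoint copies of a connected graph $G$ and $g:V(G_1)\to V(G_2)$ a function. The functigraph $F_G$ (which depends on $g$) has vertex set $V(G_1)\cup V(G_2)$ and edge set $E(G_1)\cup E(G_2)\cup\{uv: u\in V(G_1),\ g(u)=v\}$. *)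

theory Defs
  imports Main
begin

definition simple_graph :: "'v set \<Rightarrow> ('v \<Rightarrow> 'v \<Rightarrow> bool) \<Rightarrow> bool" where
  "simple_graph V E \<longleftrightarrow> finite V \<and>
     (\<forall>x y. E x y \<longrightarrow> x \<in> V \<and> y \<in> V) \<and>
     (\<forall>x y. E x y \<longrightarrow> E y x) \<and> (\<forall>x. \<not> E x x)"

definition connected_graph :: "'v set \<Rightarrow> ('v \<Rightarrow> 'v \<Rightarrow> bool) \<Rightarrow> bool" where
  "connected_graph V E \<longleftrightarrow> V \<noteq> {} \<and>
     (\<forall>x\<in>V. \<forall>y\<in>V. (x, y) \<in> {(a, b). E a b}\<^sup>*)"

definition graph_aut :: "'v set \<Rightarrow> ('v \<Rightarrow> 'v \<Rightarrow> bool) \<Rightarrow> ('v \<Rightarrow> 'v) \<Rightarrow> bool" where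
  "graph_aut V E \<sigma> \<longleftrightarrow> bij_betw \<sigma> V V \<and>
     (\<forall>x\<in>V. \<forall>y\<in>V. E x y \<longleftrightarrow> E (\<sigma> x) (\<sigma> y))"

definition distinguishing :: "'v set \<Rightarrow> ('v \<Rightarrow> 'v \<Rightarrow> bool) \<Rightarrow> nat \<Rightarrow> ('v \<Rightarrow> nat) \<Rightarrow> bool" where
  "distinguishing V E t f \<longleftrightarrow> (\<forall>x\<in>V. f x \<in> {1..t}) \<and>
     (\<forall>\<sigma>. graph_aut V E \<sigma> \<and> (\<forall>x\<in>V. f (\<sigma> x) = f x) \<longrightarrow> (\<forall>x\<in>V. \<sigma> x = x))"

definition Dist :: "'v set \<Rightarrow> ('v \<Rightarrow> 'v \<Rightarrow> bool) \<Rightarrow> nat" where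
  "Dist V E = (LEAST t. \<exists>f. distinguishing V E t f)"

(* Functigraph: G_1 = Inl-copy, G_2 = Inr-copy, plus edges u -- g(u) *)
definition functi_V :: "'a set \<Rightarrow> ('a + 'a) set" where
  "functi_V V = Inl ` V \<union> Inr ` V"

fun functi_E :: "'a set \<Rightarrow> ('a \<Rightarrow> 'a \<Rightarrow> bool) \<Rightarrow> ('a \<Rightarrow> 'a) \<Rightarrow> 'a + 'a \<Rightarrow> 'a + 'a \<Rightarrow> bool" where
  "functi_E V E g (Inl x) (Inl y) = E x y"
| "functi_E V E g (Inr x) (Inr y) = E x y"
| "functi_E V E g (Inl u) (Inr v) = (u \<in> V \<and> g u = v)"
| "functi_E V E g (Inr v) (Inl u) = (u \<in> V \<and> g u = v)"

end

theory Submission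
  imports Defs
begin

text \<open>Lift a distinguishing labeling f of G with labels in {1..t} to the functigraph:
both copies are labeled by f, except that the vertices of the image of g in the second copy
get the new label t+1. A label-preserving automorphism must then map the first copy into itself:
otherwise, by connectivity, the whole first copy would land in the second copy outside the image of
g, which has fewer than |V| vertices. So it restricts to label-preserving automorphisms of
both copies, which are trivial.\<close>

lemma distinguishing_mono:
  assumes "distinguishing V E t f" "t \<le> t'"
  shows "distinguishing V E t' f"
  using assms by (auto simp: distinguishing_def)

lemma distinguishing_card:
  assumes "finite V"
  shows "\<exists>f. distinguishing V E (card V) f"
proof -
  obtain h where h: "bij_betw h V {0..<card V}"
    using ex_bij_betw_finite_nat[OF assms] by blast
  have "distinguishing V E (card V) (\<lambda>x. h x + 1)"
    unfolding distinguishing_def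
  proof (intro conjI allI impI ballI)
    fix x assume "x \<in> V"
    then show "h x + 1 \<in> {1..card V}" using bij_betwE[OF h] by fastforce
  next
    fix \<sigma> x assume \<sigma>: "graph_aut V E \<sigma> \<and> (\<forall>x\<in>V. h (\<sigma> x) + 1 = h x + 1)" and "x \<in> V"
    then have "\<sigma> x \<in> V" by (auto simp: graph_aut_def bij_betw_def)
    with \<sigma> \<open>x \<in> V\<close> h show "\<sigma> x = x" by (auto simp: bij_betw_def inj_on_def)
  qed
  then show ?thesis by blast
qed

lemma Dist_distinguishing:
  assumes "finite V"
  obtains f where "distinguishing V E (Dist V E) f"
proof -
  have "\<exists>f. distinguishing V E (Dist V E) f"
    unfolding Dist_def by (rule LeastI_ex) (use distinguishing_card[OF assms] in blast)
  then show ?thesis using that by blast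
qed

lemma Dist_le: "distinguishing V E t f \<Longrightarrow> Dist V E \<le> t"
  unfolding Dist_def by (rule Least_le) blast

lemma Dist_le_card: "finite V \<Longrightarrow> Dist V E \<le> card V"
  using distinguishing_card Dist_le by blast

lemma Dist_gt:
  assumes "finite V" "\<And>f. \<not> distinguishing V E t f"
  shows "t < Dist V E"
proof (rule ccontr)
  assume "\<not> t < Dist V E"
  moreover obtain f where "distinguishing V E (Dist V E) f"
    using Dist_distinguishing[OF assms(1)] .
  ultimately show False using assms(2) distinguishing_mono by (metis not_less)
qed

lemma Dist_ge_1:
  assumes "finite V" "V \<noteq> {}"
  shows "1 \<le> Dist V E"
proof -
  have "\<not> distinguishing V E 0 f" for f
    using assms(2) by (auto simp: distinguishing_def)
  then show ?thesis using Dist_gt[OF assms(1)] by (metis One_nat_def Suc_leI)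
qed

lemma graph_aut_restrict:
  assumes \<sigma>: "graph_aut V' E' \<sigma>" and "finite V" "inj c" "c ` V \<subseteq> V'"
    and \<tau>: "\<forall>x\<in>V. \<tau> x \<in> V \<and> \<sigma> (c x) = c (\<tau> x)" and c_edges: "\<forall>x y. E' (c x) (c y) = E x y"
  shows "graph_aut V E \<tau>"
proof -
  have inj\<sigma>: "inj_on \<sigma> V'" using \<sigma> by (auto simp: graph_aut_def bij_betw_def)
  have "inj_on \<tau> V"
  proof
    fix x y assume "x \<in> V" "y \<in> V" "\<tau> x = \<tau> y"
    then have "\<sigma> (c x) = \<sigma> (c y)" using \<tau> by auto
    then have "c x = c y" using inj\<sigma> assms(4) \<open>x \<in> V\<close> \<open>y \<in> V\<close> by (auto simp: inj_on_def)
    then show "x = y" using assms(3) by (simp add: inj_def)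
  qed
  moreover have "\<tau> ` V \<subseteq> V" using \<tau> by auto
  ultimately have "bij_betw \<tau> V V" using endo_inj_surj[OF assms(2)] by (simp add: bij_betw_def)
  moreover have "E x y \<longleftrightarrow> E (\<tau> x) (\<tau> y)" if "x \<in> V" "y \<in> V" for x y
  proof -
    have "E x y = E' (c x) (c y)" using c_edges by simp
    also have "\<dots> = E' (\<sigma> (c x)) (\<sigma> (c y))" using \<sigma> assms(4) that by (auto simp: graph_aut_def)
    also have "\<dots> = E (\<tau> x) (\<tau> y)" using \<tau> c_edges that by simp
    finally show ?thesis .
  qed
  ultimately show ?thesis by (auto simp: graph_aut_def)
qed

lemma graph_aut_involution:
  assumes "\<forall>x\<in>V. \<sigma> x \<in> V" "\<forall>x\<in>V. \<sigma> (\<sigma> x) = x"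
    and "\<forall>x\<in>V. \<forall>y\<in>V. E x y \<longleftrightarrow> E (\<sigma> x) (\<sigma> y)"
  shows "graph_aut V E \<sigma>"
proof -
  have "bij_betw \<sigma> V V" by (rule bij_betw_byWitness[where f'=\<sigma>]) (use assms in auto)
  then show ?thesis using assms(3) unfolding graph_aut_def by blast
qed

definition degree :: "'v set \<Rightarrow> ('v \<Rightarrow> 'v \<Rightarrow> bool) \<Rightarrow> 'v \<Rightarrow> nat" where
  "degree V E x = card {y\<in>V. E x y}"

lemma degree_graph_aut:
  assumes "graph_aut V E \<sigma>" "x \<in> V"
  shows "degree V E (\<sigma> x) = degree V E x"
proof -
  have bij: "bij_betw \<sigma> V V" and E: "\<forall>x\<in>V. \<forall>y\<in>V. E x y \<longleftrightarrow> E (\<sigma> x) (\<sigma> y)"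
    using assms(1) by (auto simp: graph_aut_def)
  have "{y\<in>V. E (\<sigma> x) y} = \<sigma> ` {y\<in>V. E x y}"
  proof
    show "\<sigma> ` {y\<in>V. E x y} \<subseteq> {y\<in>V. E (\<sigma> x) y}" using E assms(2) bij_betwE[OF bij] by auto
  next
    show "{y\<in>V. E (\<sigma> x) y} \<subseteq> \<sigma> ` {y\<in>V. E x y}"
    proof
      fix z assume z: "z \<in> {y\<in>V. E (\<sigma> x) y}"
      then obtain y where "y \<in> V" "z = \<sigma> y" using bij by (auto simp: bij_betw_def)
      then show "z \<in> \<sigma> ` {y\<in>V. E x y}" using z E assms(2) by auto
    qed
  qed
  moreover have "inj_on \<sigma> {y\<in>V. E x y}"
    using bij by (auto simp: bij_betw_def intro: inj_on_subset)
  ultimately show ?thesis by (simp add: degree_def card_image)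
qed

lemma finite_functi_V: "finite V \<Longrightarrow> finite (functi_V V)"
  by (simp add: functi_V_def)

lemma functi_V_eq_empty_iff [simp]: "functi_V V = {} \<longleftrightarrow> V = {}"
  by (simp add: functi_V_def)

lemma functi_V_iff:
  "Inl x \<in> functi_V V \<longleftrightarrow> x \<in> V" "Inr x \<in> functi_V V \<longleftrightarrow> x \<in> V"
  by (auto simp: functi_V_def)

definition lift_labeling :: "'a set \<Rightarrow> ('a \<Rightarrow> 'a) \<Rightarrow> nat \<Rightarrow> ('a \<Rightarrow> nat) \<Rightarrow> 'a + 'a \<Rightarrow> nat" where
  "lift_labeling V g t f = case_sum f (\<lambda>y. if y \<in> g ` V then t + 1 else f y)"

lemma lift_labeling_eq_top_iff:
  assumes "\<forall>x\<in>V. f x \<in> {1..t}" "w \<in> functi_V V"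
  shows "lift_labeling V g t f w = t + 1 \<longleftrightarrow> w \<in> Inr ` g ` V"
  using assms by (cases w) (force simp: functi_V_def lift_labeling_def)+

lemma functigraph_aut_escape_spreads:
  assumes S: "simple_graph V E" and C: "connected_graph V E"
    and aut: "graph_aut (functi_V V) (functi_E V E g) \<sigma>"
    and avoid: "\<forall>x\<in>V. \<sigma> (Inl x) \<notin> Inr ` g ` V"
    and x0: "x0 \<in> V" "\<sigma> (Inl x0) \<notin> Inl ` V"
  shows "\<forall>x\<in>V. \<sigma> (Inl x) \<in> Inr ` (V - g ` V)"
proof
  let ?FE = "functi_E V E g"
  have into: "\<sigma> (Inl x) \<in> functi_V V" if "x \<in> V" for x
    using aut that by (auto simp: graph_aut_def bij_betw_def functi_V_def)
  have EV: "E x y \<Longrightarrow> x \<in> V \<and> y \<in> V" for x y using S by (auto simp: simple_graph_def)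
  fix x assume "x \<in> V"
  with C x0 have "(x0, x) \<in> {(a, b). E a b}\<^sup>*" by (auto simp: connected_graph_def)
  then show "\<sigma> (Inl x) \<in> Inr ` (V - g ` V)"
  proof (induction rule: rtrancl_induct)
    case base
    show ?case using into[OF x0(1)] x0 avoid by (force simp: functi_V_def)
  next
    case (step a c)
    then have "E a c" "a \<in> V" "c \<in> V" using EV by auto
    from step.IH obtain b where b: "b \<in> V" "b \<notin> g ` V" "\<sigma> (Inl a) = Inr b" by auto
    have "?FE (\<sigma> (Inl a)) (\<sigma> (Inl c))"
      using aut \<open>E a c\<close> \<open>a \<in> V\<close> \<open>c \<in> V\<close> unfolding graph_aut_def
      by (metis functi_E.simps(1) functi_V_iff(1))
    moreover have "\<sigma> (Inl c) \<notin> Inr ` g ` V" using avoid \<open>c \<in> V\<close> by blast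
    \<comment> \<open>a neighbour of \<open>Inr b\<close> in the first copy would be a preimage of \<open>b\<close> under \<open>g\<close>\<close>
    ultimately show ?case using b EV into[OF \<open>c \<in> V\<close>]
      by (cases "\<sigma> (Inl c)") (auto simp: functi_V_def)
  qed
qed

lemma functigraph_aut_maps_Inl:
  assumes S: "simple_graph V E" and C: "connected_graph V E" and gV: "\<forall>u\<in>V. g u \<in> V"
    and aut: "graph_aut (functi_V V) (functi_E V E g) \<sigma>"
    and avoid: "\<forall>x\<in>V. \<sigma> (Inl x) \<notin> Inr ` g ` V"
  shows "\<forall>x\<in>V. \<sigma> (Inl x) \<in> Inl ` V"
proof (rule ccontr)
  assume "\<not> ?thesis"
  then obtain x0 where x0: "x0 \<in> V" "\<sigma> (Inl x0) \<notin> Inl ` V" by blast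
  have fin: "finite V" using S by (simp add: simple_graph_def)
  have "inj_on \<sigma> (Inl ` V)"
    using aut by (auto simp: graph_aut_def bij_betw_def functi_V_def intro: inj_on_subset)
  then have "card V = card (\<sigma> ` Inl ` V)" by (simp add: card_image)
  also have "\<dots> \<le> card (Inr ` (V - g ` V) :: ('a + 'a) set)"
    using functigraph_aut_escape_spreads[OF S C aut avoid x0] fin by (intro card_mono) auto
  also have "\<dots> = card (V - g ` V)" by (simp add: card_image)
  also have "\<dots> < card V" using x0(1) gV fin by (intro psubset_card_mono) auto
  finally show False by simp
qed

lemma functigraph_aut_fixes_Inl:
  assumes S: "simple_graph V E" and C: "connected_graph V E" and gV: "\<forall>u\<in>V. g u \<in> V"
    and f: "distinguishing V E t f"
    and aut: "graph_aut (functi_V V) (functi_E V E g) \<sigma>"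
    and pres: "\<forall>w\<in>functi_V V. lift_labeling V g t f (\<sigma> w) = lift_labeling V g t f w"
  shows "\<forall>x\<in>V. \<sigma> (Inl x) = Inl x"
proof -
  have fin: "finite V" using S by (simp add: simple_graph_def)
  have range: "\<forall>x\<in>V. f x \<in> {1..t}" using f by (simp add: distinguishing_def)
  have into: "\<sigma> w \<in> functi_V V" if "w \<in> functi_V V" for w
    using aut that by (auto simp: graph_aut_def bij_betw_def)
  have label_Inl: "lift_labeling V g t f (\<sigma> (Inl x)) = f x" if "x \<in> V" for x
    using pres that by (simp add: functi_V_iff lift_labeling_def)
  have "\<sigma> (Inl x) \<notin> Inr ` g ` V" if "x \<in> V" for x
    using lift_labeling_eq_top_iff[OF range into, of "Inl x" g] label_Inl[OF that] range that
    by (force simp: functi_V_iff)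
  then have Inl: "\<forall>x\<in>V. \<sigma> (Inl x) \<in> Inl ` V"
    using functigraph_aut_maps_Inl[OF S C gV aut] by blast
  define \<tau> where "\<tau> x = projl (\<sigma> (Inl x))" for x
  have \<tau>: "\<forall>x\<in>V. \<tau> x \<in> V \<and> \<sigma> (Inl x) = Inl (\<tau> x)"
    using Inl by (auto simp: \<tau>_def)
  have "graph_aut V E \<tau>"
    by (rule graph_aut_restrict[OF aut fin _ _ \<tau>]) (auto simp: functi_V_def)
  moreover have "\<forall>x\<in>V. f (\<tau> x) = f x"
    using label_Inl \<tau> by (simp add: lift_labeling_def)
  ultimately have "\<forall>x\<in>V. \<tau> x = x" using f by (simp add: distinguishing_def)
  with \<tau> show ?thesis by auto
qed

lemma functigraph_aut_fixes_Inr: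
  assumes fin: "finite V" and gV: "\<forall>u\<in>V. g u \<in> V"
    and f: "distinguishing V E t f"
    and aut: "graph_aut (functi_V V) (functi_E V E g) \<sigma>"
    and pres: "\<forall>w\<in>functi_V V. lift_labeling V g t f (\<sigma> w) = lift_labeling V g t f w"
    and Inl_fixed: "\<forall>x\<in>V. \<sigma> (Inl x) = Inl x"
  shows "\<forall>y\<in>V. \<sigma> (Inr y) = Inr y"
proof -
  have range: "\<forall>x\<in>V. f x \<in> {1..t}" using f by (simp add: distinguishing_def)
  have bij: "bij_betw \<sigma> (functi_V V) (functi_V V)" using aut by (simp add: graph_aut_def)
  have to_Inr: "\<sigma> (Inr y) \<in> Inr ` V" if "y \<in> V" for y
  proof (cases "\<sigma> (Inr y)")
    case (Inl x)
    moreover have "\<sigma> (Inr y) \<in> functi_V V" using bij_betwE[OF bij] that by (simp add: functi_V_iff)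
    ultimately have "x \<in> V" "\<sigma> (Inr y) = \<sigma> (Inl x)" using Inl_fixed by (auto simp: functi_V_iff)
    then have "Inr y = Inl x"
      using inj_onD[OF bij_betw_imp_inj_on[OF bij], of "Inr y" "Inl x"] that
      by (simp add: functi_V_iff)
    then show ?thesis by simp
  next
    case (Inr z)
    moreover have "\<sigma> (Inr y) \<in> functi_V V" using bij_betwE[OF bij] that by (simp add: functi_V_iff)
    ultimately show ?thesis by (auto simp: functi_V_iff)
  qed
  define \<tau> where "\<tau> y = projr (\<sigma> (Inr y))" for y
  have \<tau>: "\<forall>y\<in>V. \<tau> y \<in> V \<and> \<sigma> (Inr y) = Inr (\<tau> y)"
    using to_Inr by (force simp: \<tau>_def)
  have \<tau>_aut: "graph_aut V E \<tau>"
    by (rule graph_aut_restrict[OF aut fin _ _ \<tau>]) (auto simp: functi_V_def)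
  have \<tau>_image: "\<tau> (g u) = g u" if "u \<in> V" for u
  proof -
    have "functi_E V E g (Inl u) (Inr (g u))" using that by simp
    then have "functi_E V E g (\<sigma> (Inl u)) (\<sigma> (Inr (g u)))"
      using aut that gV unfolding graph_aut_def by (metis functi_V_iff)
    then show ?thesis using Inl_fixed \<tau> that gV by auto
  qed
  have "f (\<tau> y) = f y" if "y \<in> V" for y
  proof (cases "y \<in> g ` V")
    case True
    then show ?thesis using \<tau>_image by auto
  next
    case False
    have "lift_labeling V g t f (\<sigma> (Inr y)) = lift_labeling V g t f (Inr y)"
      using pres that by (simp add: functi_V_iff)
    then have "lift_labeling V g t f (Inr (\<tau> y)) = f y"
      using \<tau> that False by (simp add: lift_labeling_def)
    \<comment> \<open>\<open>\<tau> y\<close> cannot lie in the image of \<open>g\<close>: its label would be \<open>t + 1 > f y\<close>\<close>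
    then show ?thesis using range that by (auto simp: lift_labeling_def split: if_splits)
  qed
  then have "\<forall>y\<in>V. \<tau> y = y" using f \<tau>_aut by (simp add: distinguishing_def)
  with \<tau> show ?thesis by auto
qed

lemma distinguishing_lift_labeling:
  assumes S: "simple_graph V E" and C: "connected_graph V E" and gV: "\<forall>u\<in>V. g u \<in> V"
    and f: "distinguishing V E t f"
  shows "distinguishing (functi_V V) (functi_E V E g) (t + 1) (lift_labeling V g t f)"
  unfolding distinguishing_def
proof (intro conjI allI impI)
  show "\<forall>w\<in>functi_V V. lift_labeling V g t f w \<in> {1..t + 1}"
    using f by (auto simp: distinguishing_def functi_V_def lift_labeling_def)
next
  fix \<sigma> assume "graph_aut (functi_V V) (functi_E V E g) \<sigma> \<and>
    (\<forall>w\<in>functi_V V. lift_labeling V g t f (\<sigma> w) = lift_labeling V g t f w)"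
  then have aut: "graph_aut (functi_V V) (functi_E V E g) \<sigma>"
    and pres: "\<forall>w\<in>functi_V V. lift_labeling V g t f (\<sigma> w) = lift_labeling V g t f w" by auto
  have fin: "finite V" using S by (simp add: simple_graph_def)
  have "\<forall>x\<in>V. \<sigma> (Inl x) = Inl x" by (rule functigraph_aut_fixes_Inl[OF S C gV f aut pres])
  moreover have "\<forall>y\<in>V. \<sigma> (Inr y) = Inr y"
    by (rule functigraph_aut_fixes_Inr[OF fin gV f aut pres calculation])
  ultimately show "\<forall>w\<in>functi_V V. \<sigma> w = w" by (auto simp: functi_V_def)
qed

lemma Dist_functigraph_le:
  assumes "simple_graph V E" "connected_graph V E" "\<forall>u\<in>V. g u \<in> V"
  shows "Dist (functi_V V) (functi_E V E g) \<le> Dist V E + 1"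
proof -
  obtain f where "distinguishing V E (Dist V E) f"
    using Dist_distinguishing assms(1) by (metis simple_graph_def)
  then show ?thesis using distinguishing_lift_labeling[OF assms] Dist_le by blast
qed

lemma Dist_functigraph_ge_1:
  assumes "simple_graph V E" "connected_graph V E"
  shows "1 \<le> Dist (functi_V V) (functi_E V E g)"
  using assms by (intro Dist_ge_1) (auto simp: simple_graph_def connected_graph_def finite_functi_V)

definition P3 :: "nat \<Rightarrow> nat \<Rightarrow> bool" where
  "P3 x y \<longleftrightarrow> (x = 0 \<and> y = 1) \<or> (x = 1 \<and> y = 0) \<or> (x = 1 \<and> y = 2) \<or> (x = 2 \<and> y = 1)"

definition P3_fold :: "nat \<Rightarrow> nat" where
  "P3_fold u = (if u = 2 then 1 else u)"

lemma simple_graph_P3: "simple_graph {0, 1, 2} P3"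
  by (auto simp: simple_graph_def P3_def)

lemma connected_graph_P3: "connected_graph {0, 1, 2} P3"
proof -
  let ?R = "{(a, b). P3 a b}"
  have a: "(0, 1) \<in> ?R\<^sup>*" "(1, 0) \<in> ?R\<^sup>*" "(1, 2) \<in> ?R\<^sup>*" "(2, 1) \<in> ?R\<^sup>*"
    by (auto simp: P3_def intro!: r_into_rtrancl)
  then have "(0, 2) \<in> ?R\<^sup>*" "(2, 0) \<in> ?R\<^sup>*" using rtrancl_trans by meson+
  with a show ?thesis unfolding connected_graph_def by auto
qed

lemma functigraph_P3_rigid:
  assumes aut: "graph_aut (functi_V {0, 1, 2}) (functi_E {0, 1, 2} P3 P3_fold) \<sigma>"
  shows "\<forall>w\<in>functi_V {0, 1, 2}. \<sigma> w = w"
proof -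
  let ?S = "{Inl 0, Inl 1, Inl 2, Inr 0, Inr 1, Inr 2} :: (nat + nat) set"
  let ?E = "functi_E {0, 1, 2} P3 P3_fold"
  have S: "functi_V {0, 1, 2} = ?S" by (auto simp: functi_V_def)
  have nbhd: "{y\<in>?S. ?E (Inl 0) y} = {Inl 1, Inr 0}" "{y\<in>?S. ?E (Inl 1) y} = {Inl 0, Inl 2, Inr 1}"
    "{y\<in>?S. ?E (Inl 2) y} = {Inl 1, Inr 1}" "{y\<in>?S. ?E (Inr 0) y} = {Inl 0, Inr 1}"
    "{y\<in>?S. ?E (Inr 1) y} = {Inl 1, Inl 2, Inr 0, Inr 2}" "{y\<in>?S. ?E (Inr 2) y} = {Inr 1}"
    by (auto simp: P3_def P3_fold_def)
  have deg: "degree ?S ?E (Inl 0) = 2" "degree ?S ?E (Inl 1) = 3" "degree ?S ?E (Inl 2) = 2"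
    "degree ?S ?E (Inr 0) = 2" "degree ?S ?E (Inr 1) = 4" "degree ?S ?E (Inr 2) = 1"
    unfolding degree_def nbhd by auto
  have aut': "graph_aut ?S ?E \<sigma>" using aut S by simp
  have bij: "bij_betw \<sigma> ?S ?S" and E: "\<forall>x\<in>?S. \<forall>y\<in>?S. ?E x y \<longleftrightarrow> ?E (\<sigma> x) (\<sigma> y)"
    using aut' unfolding graph_aut_def by blast+
  have inj: "inj_on \<sigma> ?S" using bij by (simp add: bij_betw_def)
  have in_S: "\<sigma> x \<in> ?S" if "x \<in> ?S" for x
    using bij_betwE[OF bij] that by blast
  note same_degree = degree_graph_aut[OF aut']
  have r2: "\<sigma> (Inr 2) = Inr 2" using in_S[of "Inr 2"] same_degree[of "Inr 2"] deg by auto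
  have l1: "\<sigma> (Inl 1) = Inl 1" using in_S[of "Inl 1"] same_degree[of "Inl 1"] deg by auto
  have r1: "\<sigma> (Inr 1) = Inr 1" using in_S[of "Inr 1"] same_degree[of "Inr 1"] deg by auto
  have deg2: "\<sigma> x \<in> {Inl 0, Inl 2, Inr 0}" if "x \<in> {Inl 0, Inl 2, Inr 0}" for x
    using in_S[of x] same_degree[of x] that deg by auto
  \<comment> \<open>among the vertices of degree 2 only \<open>Inl 0\<close> is not adjacent to \<open>Inr 1\<close>,
      and then only \<open>Inl 2\<close> is adjacent to \<open>Inl 1\<close>\<close>
  have "\<not> ?E (\<sigma> (Inl 0)) (Inr 1)" using E r1 by (simp add: P3_fold_def)
  then have l0: "\<sigma> (Inl 0) = Inl 0" using deg2[of "Inl 0"] by (auto simp: P3_def P3_fold_def)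
  have "?E (\<sigma> (Inl 2)) (Inl 1)" using E l1 by (simp add: P3_def)
  moreover have "\<sigma> (Inl 2) \<noteq> Inl 0" using l0 inj_onD[OF inj, of "Inl 2" "Inl 0"] by auto
  ultimately have l2: "\<sigma> (Inl 2) = Inl 2" using deg2[of "Inl 2"] by (auto simp: P3_def P3_fold_def)
  have "\<sigma> (Inr 0) \<noteq> Inl 0" "\<sigma> (Inr 0) \<noteq> Inl 2"
    using l0 l2 inj_onD[OF inj, of "Inr 0" "Inl 0"] inj_onD[OF inj, of "Inr 0" "Inl 2"] by auto
  then have r0: "\<sigma> (Inr 0) = Inr 0" using deg2[of "Inr 0"] by auto
  show ?thesis using l0 l1 l2 r0 r1 r2 S by auto
qed

lemma Dist_functigraph_P3: "Dist (functi_V {0, 1, 2}) (functi_E {0, 1, 2} P3 P3_fold) = 1"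
proof -
  have "distinguishing (functi_V {0, 1, 2}) (functi_E {0, 1, 2} P3 P3_fold) 1 (\<lambda>_. 1)"
    using functigraph_P3_rigid by (simp add: distinguishing_def)
  then show ?thesis
    using Dist_le Dist_functigraph_ge_1[OF simple_graph_P3 connected_graph_P3] le_antisym by blast
qed

definition K2 :: "nat \<Rightarrow> nat \<Rightarrow> bool" where
  "K2 x y \<longleftrightarrow> (x = 0 \<and> y = 1) \<or> (x = 1 \<and> y = 0)"

lemma simple_graph_K2: "simple_graph {0, 1} K2"
  by (auto simp: simple_graph_def K2_def)

lemma connected_graph_K2: "connected_graph {0, 1} K2"
  by (auto simp: connected_graph_def K2_def intro!: r_into_rtrancl)

text \<open>The functigraph of K2 under the identity is the 4-cycle
Inl 0, Inl 1, Inr 1, Inr 0. With two labels either one of its diagonals or two opposite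
edges are monochromatic, and the reflection swapping their ends preserves the labels.\<close>

lemma functigraph_K2_not_2_distinguishing:
  "\<not> distinguishing (functi_V {0, 1}) (functi_E {0, 1} K2 id) 2 f"
proof
  assume d: "distinguishing (functi_V {0, 1}) (functi_E {0, 1} K2 id) 2 f"
  let ?V = "{Inl 0, Inl 1, Inr 0, Inr 1} :: (nat + nat) set" and ?E = "functi_E {0, 1} K2 id"
  let ?a = "Inl 0 :: nat + nat" and ?b = "Inl 1 :: nat + nat"
    and ?c = "Inr 1 :: nat + nat" and ?d = "Inr 0 :: nat + nat"
  have V: "functi_V {0, 1} = ?V" by (auto simp: functi_V_def)
  have moved: "graph_aut ?V ?E \<sigma> \<Longrightarrow> \<forall>x\<in>?V. f (\<sigma> x) = f x \<Longrightarrow> z \<in> ?V \<Longrightarrow> \<sigma> z = z" for \<sigma> z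
    using d unfolding distinguishing_def V by blast
  have labels: "f ?a \<in> {1..2}" "f ?b \<in> {1..2}" "f ?c \<in> {1..2}" "f ?d \<in> {1..2}"
    using d unfolding distinguishing_def V by auto
  consider "f ?b = f ?d" | "f ?a = f ?c" | "f ?a = f ?b" "f ?c = f ?d" | "f ?a = f ?d" "f ?b = f ?c"
    using labels by fastforce
  then show False
  proof cases
    case 1
    have "graph_aut ?V ?E (id(?b := ?d, ?d := ?b))" by (rule graph_aut_involution) (auto simp: K2_def)
    then show False using moved[of "id(?b := ?d, ?d := ?b)" ?b] 1 by auto
  next
    case 2
    have "graph_aut ?V ?E (id(?a := ?c, ?c := ?a))" by (rule graph_aut_involution) (auto simp: K2_def)
    then show False using moved[of "id(?a := ?c, ?c := ?a)" ?a] 2 by auto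
  next
    case 3
    have "graph_aut ?V ?E (id(?a := ?b, ?b := ?a, ?c := ?d, ?d := ?c))"
      by (rule graph_aut_involution) (auto simp: K2_def)
    then show False using moved[of "id(?a := ?b, ?b := ?a, ?c := ?d, ?d := ?c)" ?a] 3 by auto
  next
    case 4
    have "graph_aut ?V ?E (id(?a := ?d, ?d := ?a, ?b := ?c, ?c := ?b))"
      by (rule graph_aut_involution) (auto simp: K2_def)
    then show False using moved[of "id(?a := ?d, ?d := ?a, ?b := ?c, ?c := ?b)" ?a] 4 by auto
  qed
qed

lemma Dist_functigraph_K2: "Dist (functi_V {0, 1}) (functi_E {0, 1} K2 id) = Dist {0, 1} K2 + 1"
proof -
  have "Dist (functi_V {0, 1}) (functi_E {0, 1} K2 id) \<le> Dist {0, 1} K2 + 1"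
    by (rule Dist_functigraph_le[OF simple_graph_K2 connected_graph_K2]) simp
  moreover have "Dist {0, 1 :: nat} K2 \<le> card {0, 1 :: nat}" by (rule Dist_le_card) simp
  moreover have "card {0, 1 :: nat} = 2" by simp
  moreover have "2 < Dist (functi_V {0, 1}) (functi_E {0, 1} K2 id)"
    by (rule Dist_gt[OF finite_functi_V functigraph_K2_not_2_distinguishing]) simp
  ultimately show ?thesis by linarith
qed

theorem proposition2p1:
  fixes V :: "'a set" and E :: "'a \<Rightarrow> 'a \<Rightarrow> bool" and g :: "'a \<Rightarrow> 'a"
  assumes "simple_graph V E" and "connected_graph V E" and "card V \<ge> 2"
    and "\<forall>u\<in>V. g u \<in> V"
  shows "1 \<le> Dist (functi_V V) (functi_E V E g) \<and>
         Dist (functi_V V) (functi_E V E g) \<le> Dist V E + 1 \<and>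
         (\<exists>(W :: nat set) H h. simple_graph W H \<and> connected_graph W H \<and> card W \<ge> 2 \<and>
             (\<forall>u\<in>W. h u \<in> W) \<and> Dist (functi_V W) (functi_E W H h) = 1) \<and>
         (\<exists>(W :: nat set) H h. simple_graph W H \<and> connected_graph W H \<and> card W \<ge> 2 \<and>
             (\<forall>u\<in>W. h u \<in> W) \<and> Dist (functi_V W) (functi_E W H h) = Dist W H + 1)"
proof (intro conjI)
  show "1 \<le> Dist (functi_V V) (functi_E V E g)"
    using Dist_functigraph_ge_1[OF assms(1,2)] .
  show "Dist (functi_V V) (functi_E V E g) \<le> Dist V E + 1"
    using Dist_functigraph_le[OF assms(1,2,4)] .
  have "\<forall>u\<in>{0, 1, 2}. P3_fold u \<in> {0, 1, 2}" by (simp add: P3_fold_def)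
  then show "\<exists>(W :: nat set) H h. simple_graph W H \<and> connected_graph W H \<and> card W \<ge> 2 \<and>
      (\<forall>u\<in>W. h u \<in> W) \<and> Dist (functi_V W) (functi_E W H h) = 1"
    using simple_graph_P3 connected_graph_P3 Dist_functigraph_P3
    by (intro exI[of _ "{0, 1, 2}"] exI[of _ P3] exI[of _ P3_fold]) simp
  show "\<exists>(W :: nat set) H h. simple_graph W H \<and> connected_graph W H \<and> card W \<ge> 2 \<and>
      (\<forall>u\<in>W. h u \<in> W) \<and> Dist (functi_V W) (functi_E W H h) = Dist W H + 1"
    using simple_graph_K2 connected_graph_K2 Dist_functigraph_K2
    by (intro exI[of _ "{0, 1}"] exI[of _ K2] exI[of _ id]) simp
qed

end
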